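(* For any instance of MPMD or MBPMD, Greedy Dual eventually matches every request, i.e., it returns a feasible perfect matching of all $2m$ requests.
   Context: Problem (MPMD / MBPMD). Let $(\mathcal{X},\mathrm{dist})$ be a metric space. An instance consists of $2m$ requests $u_1,\dots,u_{2m}$. Each request $u$ is a triple $(\mathrm{pos}(u),\mathrm{atime}(u),\mathrm{sgn}(u))$, where $\mathrm{pos}(u)\in\mathcal{X}$ is its location and $\mathrm{atime}(u)\ge0$ is its arrival time, with arrival times nondecreasing. In MPMD, $\mathrm{sgn}(u)=0$ for all requests. In MBPMD, exactly $m$ requests have sign $+1$ and $m$ have sign $-1$. At time $\tau$, an algorithm may match two arrived, unmatched requests $u,v$ with $\mathrm{sgn}(u)=-\mathrm{sgn}(v)$, at cost $\mathrm{dist}(\mathrm{pos}(u),\mathrm{pos}(v))$ (connection cost) plus $(\tau-\mathrm{atime}(u))+(\tau-\mathrm{atime}(v))$ (waiting costs). All requests must eventually be matched. Notation. Edges are unordered pairs $\{u,v\}$ of distinct requests with $\mathrm{sgn}(u)=-\mathrm{sgn}(v)$. For a set $S$ of requests, $\delta(S)$ is the set of edges with exactly one endpoint in $S$. In MPMD, $\mathrm{sur}(S)=|S|\bmod 2$; in MBPMD, $\mathrm{sur}(S)=|\sum_{u\in S}\mathrm{sgn}(u)|$. For an edge $e=(u,v)$, $\mathrm{cost}(e)=\mathrm{dist}(\mathrm{pos}(u),\mathrm{pos}(v))+|\mathrm{atime}(u)-\mathrm{atime}(v)|$. Algorithm Greedy Dual (GD). GD maintains a dual variable $y_S\ge0$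 for every set $S$ of already-arrived requests; $y_S(\tau)$ denotes its value at time $\tau$. It also maintains a partition of the arrived requests into active sets, with $\mathcal{A}(u)$ denoting the active set containing $u$. An active set is growing if it contains at least one free request, and non-growing otherwise. - When a request $u$ arrives, $\mathcal{A}(u)\leftarrow\{u\}$ becomes a new active set, and $y_S\leftarrow 0$ for every new set $S$ containing $u$. - Tight-constraint event: while there is an edge $e=(u,v)$ between arrived requests with $\mathcal{A}(u)\neq\mathcal{A}(v)$ and $\sum_{S:\,e\in\delta(S)}y_S=\mathrm{cost}(e)$, GD does the following. It merges the two sets: $S=\mathcal{A}(u)\cup\mathcal{A}(v)$ becomes active and $\mathcal{A}(w)\leftarrow S$ for all $w\in S$, while $\mathcal{A}(u)$ and $\mathcal{A}(v)$ become inactive. It marks the edge $e$. Then, while there are free $u',v'\in S$ with $\mathrm{sgn}(u')=-\mathrm{sgn}(v')$, it matches $u'$ with $v'$ at the current time. - At all other times, $y_S$ increases continuously at rate $1$ (the same rate as time) for every active growing set $S$; all other dual variables stay constant. *)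

theory Defs
  imports Complex_Main
begin

text \<open>Requests are indexed by 0, ..., 2m-1 in order of arrival.  A request u has
  position pos u, arrival time atime u and sign sg u.\<close>

definition valid_instance :: "nat \<Rightarrow> (nat \<Rightarrow> real) \<Rightarrow> (nat \<Rightarrow> int) \<Rightarrow> bool" where
  "valid_instance m atime sg \<longleftrightarrow>
     (\<forall>i<2*m. 0 \<le> atime i) \<and>
     (\<forall>i j. i \<le> j \<longrightarrow> j < 2*m \<longrightarrow> atime i \<le> atime j) \<and>
     ((\<forall>i<2*m. sg i = 0) \<comment> \<open>MPMD\<close>
      \<or> ((\<forall>i<2*m. sg i = 1 \<or> sg i = -1) \<and> card {i. i < 2*m \<and> sg i = 1} = m))" \<comment> \<open>MBPMD\<close>

definition cost :: "(nat \<Rightarrow> 'a::metric_space) \<Rightarrow> (nat \<Rightarrow> real) \<Rightarrow> nat \<Rightarrow> nat \<Rightarrow> real" where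
  "cost pos atime u v = dist (pos u) (pos v) + \<bar>atime u - atime v\<bar>"

record gd_state =
  time :: real
  arrived :: nat
  active :: "nat set set"
  yv :: "nat set \<Rightarrow> real"
  matching :: "(nat \<times> nat) set"
  marked :: "nat set set"

definition free :: "gd_state \<Rightarrow> nat \<Rightarrow> bool" where
  "free s u \<longleftrightarrow> u < arrived s \<and> (\<forall>(a,b)\<in>matching s. u \<noteq> a \<and> u \<noteq> b)"

definition growing :: "gd_state \<Rightarrow> nat set \<Rightarrow> bool" where
  "growing s S \<longleftrightarrow> (\<exists>u\<in>S. free s u)"

definition dualsum :: "nat \<Rightarrow> (nat set \<Rightarrow> real) \<Rightarrow> nat \<Rightarrow> nat \<Rightarrow> real" where
  "dualsum n y u v = (\<Sum>S\<in>{S. S \<subseteq> {..<n} \<and> (u \<in> S) \<noteq> (v \<in> S)}. y S)"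

definition cross_edge :: "(nat \<Rightarrow> int) \<Rightarrow> gd_state \<Rightarrow> nat \<Rightarrow> nat \<Rightarrow> bool" where
  "cross_edge sg s u v \<longleftrightarrow> u < arrived s \<and> v < arrived s \<and> u \<noteq> v \<and> sg u = - sg v \<and>
      \<not> (\<exists>S\<in>active s. u \<in> S \<and> v \<in> S)"

definition tight_pending :: "nat \<Rightarrow> (nat \<Rightarrow> 'a::metric_space) \<Rightarrow> (nat \<Rightarrow> real) \<Rightarrow> (nat \<Rightarrow> int) \<Rightarrow> gd_state \<Rightarrow> bool" where
  "tight_pending n pos atime sg s \<longleftrightarrow>
     (\<exists>u v. cross_edge sg s u v \<and> dualsum n (yv s) u v = cost pos atime u v)"

definition match_pending :: "(nat \<Rightarrow> int) \<Rightarrow> gd_state \<Rightarrow> bool" where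
  "match_pending sg s \<longleftrightarrow> (\<exists>S\<in>active s. \<exists>u\<in>S. \<exists>v\<in>S.
      u \<noteq> v \<and> free s u \<and> free s v \<and> sg u = - sg v)"

definition grow_y :: "gd_state \<Rightarrow> real \<Rightarrow> nat set \<Rightarrow> real" where
  "grow_y s d = (\<lambda>S. if S \<in> active s \<and> growing s S then yv s S + d else yv s S)"

text \<open>Matching free
  opposite-sign requests inside an active set has priority (it happens immediately
  after the merge that created the set); between events, every active growing set's
  dual grows at rate 1 until the next event (an arrival or a newly tight edge).\<close>
inductive gd_step :: "nat \<Rightarrow> (nat \<Rightarrow> 'a::metric_space) \<Rightarrow> (nat \<Rightarrow> real) \<Rightarrow> (nat \<Rightarrow> int)
     \<Rightarrow> gd_state \<Rightarrow> gd_state \<Rightarrow> bool" for n pos atime sg where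
  gd_match:
    "\<lbrakk> S \<in> active s; u \<in> S; v \<in> S; u \<noteq> v; free s u; free s v; sg u = - sg v \<rbrakk>
     \<Longrightarrow> gd_step n pos atime sg s (s\<lparr>matching := insert (u, v) (matching s)\<rparr>)"
| gd_arrive:
    "\<lbrakk> \<not> match_pending sg s; arrived s < n; atime (arrived s) = time s \<rbrakk>
     \<Longrightarrow> gd_step n pos atime sg s
           (s\<lparr>arrived := Suc (arrived s), active := insert {arrived s} (active s)\<rparr>)"
| gd_merge:
    "\<lbrakk> \<not> match_pending sg s; cross_edge sg s u v;
       dualsum n (yv s) u v = cost pos atime u v;
       S1 \<in> active s; S2 \<in> active s; u \<in> S1; v \<in> S2 \<rbrakk>
     \<Longrightarrow> gd_step n pos atime sg s
           (s\<lparr>active := insert (S1 \<union> S2) (active s - {S1, S2}),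
              marked := insert {u, v} (marked s)\<rparr>)"
| gd_grow:
    "\<lbrakk> \<not> match_pending sg s; \<not> tight_pending n pos atime sg s;
       arrived s < n \<longrightarrow> time s < atime (arrived s);
       0 < d;
       arrived s < n \<longrightarrow> time s + d \<le> atime (arrived s);
       \<forall>u v. cross_edge sg s u v \<longrightarrow> dualsum n (grow_y s d) u v \<le> cost pos atime u v;
       (arrived s < n \<and> time s + d = atime (arrived s)) \<or>
       (\<exists>u v. cross_edge sg s u v \<and> dualsum n (grow_y s d) u v = cost pos atime u v) \<rbrakk>
     \<Longrightarrow> gd_step n pos atime sg s (s\<lparr>time := time s + d, yv := grow_y s d\<rparr>)"

definition gd_init :: gd_state where
  "gd_init = \<lparr>time = 0, arrived = 0, active = {}, yv = (\<lambda>_. 0), matching = {}, marked = {}\<rparr>"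

text \<open>Every run (every maximal sequence of steps) reaches a state satisfying P
  after finitely many steps.\<close>
inductive inevitably :: "('s \<Rightarrow> 's \<Rightarrow> bool) \<Rightarrow> ('s \<Rightarrow> bool) \<Rightarrow> 's \<Rightarrow> bool" for step P where
  now: "P s \<Longrightarrow> inevitably step P s"
| later: "\<lbrakk> \<exists>s'. step s s'; \<forall>s'. step s s' \<longrightarrow> inevitably step P s' \<rbrakk> \<Longrightarrow> inevitably step P s"

definition perfect_matching :: "nat \<Rightarrow> (nat \<Rightarrow> int) \<Rightarrow> (nat \<times> nat) set \<Rightarrow> bool" where
  "perfect_matching n sg M \<longleftrightarrow>
     (\<forall>(a, b)\<in>M. a < n \<and> b < n \<and> a \<noteq> b \<and> sg a = - sg b) \<and>
     (\<forall>u<n. \<exists>!p. p \<in> M \<and> (fst p = u \<or> snd p = u))"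

end

theory Submission
  imports Defs "HOL-Library.Disjoint_Sets"
begin

text \<open>Along every run the active sets partition the arrived requests, the duals are
  feasible and charge each request at most its waiting time, and the matching pairs
  arrived requests of opposite sign.  Matches, arrivals and merges strictly decrease a
  natural-number potential and a growth phase always ends at an event, so every run is
  finite.  A run can only stop at a perfect matching: once all requests have arrived, a
  free request has a free partner of opposite sign (by parity in MPMD, by sign balance in
  MBPMD); the two cannot share an active set, since GD would match them, so the edge
  between them is a cross edge whose dual sum grows at a positive rate, and a growth phase
  is possible.\<close>

lemma inevitably_by_measure:
  fixes \<mu> :: "'s \<Rightarrow> nat"
  assumes "I s"
    and preserve: "\<And>s s'. I s \<Longrightarrow> step s s' \<Longrightarrow> I s'"
    and decrease: "\<And>s s'. I s \<Longrightarrow> step s s' \<Longrightarrow> \<mu> s' < \<mu> s"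
    and progress: "\<And>s. I s \<Longrightarrow> \<not> P s \<Longrightarrow> \<exists>s'. step s s'"
  shows "inevitably step P s"
  using \<open>I s\<close>
proof (induction "\<mu> s" arbitrary: s rule: less_induct)
  case less
  show ?case
  proof (cases "P s")
    case True
    then show ?thesis by (rule inevitably.now)
  next
    case False
    then show ?thesis
      using less progress preserve decrease by (intro inevitably.later) blast+
  qed
qed

lemma partition_on_insert_singleton:
  assumes "partition_on A P" "x \<notin> A"
  shows "partition_on (insert x A) (insert {x} P)"
proof -
  have "disjnt {x} (\<Union>P)" using assms partition_onD1 by fastforce
  moreover have "insert x A - {x} = A" using assms(2) by blast
  ultimately show ?thesis using assms(1) by (simp add: partition_on_insert)
qed

lemma partition_on_merge:
  assumes "partition_on A P" "p \<in> P" "q \<in> P"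
  shows "partition_on A (insert (p \<union> q) (P - {p, q}))"
proof (rule partition_onI)
  have P: "\<Union>P = A" "disjoint P" "{} \<notin> P"
    using assms(1) by (simp_all add: partition_on_def)
  show "\<Union>(insert (p \<union> q) (P - {p, q})) = A" using P(1) assms(2,3) by blast
  show "{} \<notin> insert (p \<union> q) (P - {p, q})" using P(3) assms(2) by auto
  have disjnt_union: "disjnt (p \<union> q) t" if "t \<in> P - {p, q}" for t
    using that P(2) assms(2,3) by (auto simp: disjnt_def disjoint_def)
  fix r t
  assume "r \<in> insert (p \<union> q) (P - {p, q})" "t \<in> insert (p \<union> q) (P - {p, q})" "r \<noteq> t"
  then consider "r = p \<union> q" "t \<in> P - {p, q}" | "t = p \<union> q" "r \<in> P - {p, q}" | "r \<in> P" "t \<in> P"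
    by blast
  then show "disjnt r t"
  proof cases
    case 1
    then show ?thesis using disjnt_union by blast
  next
    case 2
    then show ?thesis using disjnt_union disjnt_sym by blast
  next
    case 3
    then show ?thesis using P(2) \<open>r \<noteq> t\<close> by (simp add: pairwise_def)
  qed
qed

lemma partition_on_block_unique:
  assumes "partition_on A P" "p \<in> P" "q \<in> P" "x \<in> p" "x \<in> q"
  shows "p = q"
  using assms unfolding partition_on_def disjoint_def by auto

lemma card_partition_merge_less:
  assumes P: "partition_on A P" "finite P" and pq: "p \<in> P" "q \<in> P" "p \<noteq> q"
  shows "card (insert (p \<union> q) (P - {p, q})) < card P"
proof -
  have "p \<union> q \<notin> P - {p, q}"
  proof
    assume "p \<union> q \<in> P - {p, q}"
    moreover obtain x where "x \<in> p"
      using partition_onD3[OF P(1)] pq by (metis all_not_in_conv)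
    ultimately show False using partition_on_block_unique[OF P(1), of p "p \<union> q" x] pq by blast
  qed
  then have "card (insert (p \<union> q) (P - {p, q})) = card P - 2 + 1"
    using P pq by (simp add: card_Diff_subset)
  moreover have "2 \<le> card P"
    using card_mono[OF P(2), of "{p, q}"] pq by simp
  ultimately show ?thesis by linarith
qed

lemma exists_first_event:
  fixes g r :: "'e \<Rightarrow> real" and a :: real
  assumes "finite E" "\<forall>e\<in>E. 0 < g e" "\<forall>e\<in>E. 0 \<le> r e"
    and "A \<or> (\<exists>e\<in>E. 0 < r e)" "A \<Longrightarrow> 0 < a"
  shows "\<exists>d>0. (A \<longrightarrow> d \<le> a) \<and> (\<forall>e\<in>E. d * r e \<le> g e) \<and>
           ((A \<and> d = a) \<or> (\<exists>e\<in>E. d * r e = g e))"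
proof -
  define D where "D = (\<lambda>e. g e / r e) ` {e\<in>E. 0 < r e} \<union> (if A then {a} else {})"
  have "finite D" "D \<noteq> {}" using assms(1,4) by (auto simp: D_def)
  define d where "d = Min D"
  have "d \<in> D" and d_le: "\<forall>x\<in>D. d \<le> x"
    using \<open>finite D\<close> \<open>D \<noteq> {}\<close> by (simp_all add: d_def)
  show ?thesis
  proof (intro exI[of _ d] conjI)
    show "0 < d" using \<open>d \<in> D\<close> assms(2,5) by (auto simp: D_def split: if_splits)
    show "A \<longrightarrow> d \<le> a" using d_le by (auto simp: D_def)
    show "\<forall>e\<in>E. d * r e \<le> g e"
    proof
      fix e assume e: "e \<in> E"
      show "d * r e \<le> g e"
      proof (cases "0 < r e")
        case True
        then have "d \<le> g e / r e" using d_le e by (auto simp: D_def)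
        then show ?thesis using True by (simp add: pos_le_divide_eq)
      next
        case False
        then show ?thesis using assms(2,3) e by force
      qed
    qed
    show "(A \<and> d = a) \<or> (\<exists>e\<in>E. d * r e = g e)"
    proof (cases "d \<in> (\<lambda>e. g e / r e) ` {e\<in>E. 0 < r e}")
      case True
      then obtain e where "e \<in> E" "0 < r e" "d = g e / r e" by blast
      then have "d * r e = g e" by simp
      then show ?thesis using \<open>e \<in> E\<close> by blast
    next
      case False
      then show ?thesis using \<open>d \<in> D\<close> by (auto simp: D_def split: if_splits)
    qed
  qed
qed

definition matched :: "gd_state \<Rightarrow> nat set" where
  "matched s = fst ` matching s \<union> snd ` matching s"

lemma free_iff_unmatched: "free s u \<longleftrightarrow> u < arrived s \<and> u \<notin> matched s"
  unfolding free_def matched_def by force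

lemma dualsum_commute: "dualsum n y u v = dualsum n y v u"
  unfolding dualsum_def by (simp only: eq_commute[of "u \<in> _"])

lemma cost_commute: "cost pos atime u v = cost pos atime v u"
  by (simp add: cost_def dist_commute abs_minus_commute)

lemma finite_subsets_lessThan: "finite {S. S \<subseteq> {..<(n::nat)} \<and> P S}"
  by (rule finite_subset[of _ "Pow {..<n}"]) auto

definition growth_rate :: "nat \<Rightarrow> gd_state \<Rightarrow> nat \<Rightarrow> nat \<Rightarrow> real" where
  "growth_rate n s u v =
     real (card {S\<in>{S. S \<subseteq> {..<n} \<and> (u \<in> S) \<noteq> (v \<in> S)}. S \<in> active s \<and> growing s S})"

lemma sum_grow_y:
  assumes "finite A"
  shows "(\<Sum>S\<in>A. grow_y s d S) =
           (\<Sum>S\<in>A. yv s S) + d * real (card {S\<in>A. S \<in> active s \<and> growing s S})"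
proof -
  have "(\<Sum>S\<in>A. grow_y s d S) =
          (\<Sum>S\<in>A. yv s S) + (\<Sum>S\<in>A. if S \<in> active s \<and> growing s S then d else 0)"
    unfolding grow_y_def by (simp add: sum.distrib[symmetric] if_distrib cong: if_cong)
  then show ?thesis using assms by (simp add: sum.If_cases Int_def)
qed

lemma dualsum_grow_y:
  "dualsum n (grow_y s d) u v = dualsum n (yv s) u v + d * growth_rate n s u v"
  unfolding dualsum_def growth_rate_def by (rule sum_grow_y[OF finite_subsets_lessThan])

locale gd_instance =
  fixes m :: nat and pos :: "nat \<Rightarrow> 'a::metric_space"
    and atime :: "nat \<Rightarrow> real" and sg :: "nat \<Rightarrow> int"
  assumes valid: "valid_instance m atime sg"
begin

abbreviation N :: nat where "N \<equiv> 2 * m"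

lemma atime_mono: "i \<le> j \<Longrightarrow> j < N \<Longrightarrow> atime i \<le> atime j"
  using valid unfolding valid_instance_def by blast

text \<open>The third conjunct bounds the duals charged to a request by its waiting time so
  far; it is what makes the edges at a newly arrived request slack.\<close>

definition dual_inv :: "gd_state \<Rightarrow> bool" where
  "dual_inv s \<longleftrightarrow>
     (\<forall>S. 0 \<le> yv s S) \<and> (\<forall>S. yv s S \<noteq> 0 \<longrightarrow> S \<subseteq> {..<arrived s}) \<and>
     (\<forall>v<arrived s. (\<Sum>S\<in>{S. S \<subseteq> {..<N} \<and> v \<in> S}. yv s S) \<le> time s - atime v) \<and>
     (\<forall>u v. cross_edge sg s u v \<longrightarrow> dualsum N (yv s) u v \<le> cost pos atime u v)"

text \<open>The last two conjuncts give the parity (MPMD) and the sign balance (MBPMD) of the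
  unmatched requests, from which a free request finds a partner.\<close>

definition matching_inv :: "gd_state \<Rightarrow> bool" where
  "matching_inv s \<longleftrightarrow> finite (matching s) \<and>
     (\<forall>(a, b)\<in>matching s. a < arrived s \<and> b < arrived s \<and> a \<noteq> b \<and> sg a = - sg b) \<and>
     (\<forall>p\<in>matching s. \<forall>q\<in>matching s. p \<noteq> q \<longrightarrow> {fst p, snd p} \<inter> {fst q, snd q} = {}) \<and>
     card (matched s) = 2 * card (matching s) \<and> (\<Sum>x\<in>matched s. sg x) = 0"

definition gd_inv :: "gd_state \<Rightarrow> bool" where
  "gd_inv s \<longleftrightarrow> arrived s \<le> N \<and> (arrived s < N \<longrightarrow> time s \<le> atime (arrived s)) \<and>
     partition_on {..<arrived s} (active s) \<and> dual_inv s \<and> matching_inv s"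

lemma gd_inv_init: "gd_inv gd_init"
  using valid
  by (simp add: valid_instance_def gd_inv_def dual_inv_def matching_inv_def gd_init_def
      matched_def cross_edge_def partition_on_empty)

lemma matched_subset: "matching_inv s \<Longrightarrow> matched s \<subseteq> {..<arrived s}"
  unfolding matching_inv_def matched_def by fastforce

lemma matching_inv_mono:
  assumes "matching_inv s" "matching s' = matching s" "arrived s \<le> arrived s'"
  shows "matching_inv s'"
proof -
  have "matched s' = matched s" using assms(2) by (simp add: matched_def)
  then show ?thesis using assms unfolding matching_inv_def by fastforce
qed

lemma matching_inv_match:
  assumes inv: "matching_inv s" and uv: "free s u" "free s v" "u \<noteq> v" "sg u = - sg v"
  shows "matching_inv (s\<lparr>matching := insert (u, v) (matching s)\<rparr>)"
proof -
  have u: "u < arrived s" "u \<notin> matched s" and v: "v < arrived s" "v \<notin> matched s"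
    using uv free_iff_unmatched by auto
  have fin: "finite (matching s)" "finite (matched s)"
    using inv by (simp_all add: matching_inv_def matched_def)
  have new: "(u, v) \<notin> matching s" using u(2) unfolding matched_def by force
  have apart: "{u, v} \<inter> {fst q, snd q} = {}" if "q \<in> matching s" for q
    using that u(2) v(2) unfolding matched_def by force
  have "matched (s\<lparr>matching := insert (u, v) (matching s)\<rparr>) = insert u (insert v (matched s))"
    by (auto simp: matched_def)
  then show ?thesis
    using inv u v fin new apart uv(3,4)
    unfolding matching_inv_def by (auto simp: card_insert_if)
qed

lemma dual_inv_update_matching: "dual_inv (s\<lparr>matching := M\<rparr>) = dual_inv s"
  by (simp add: dual_inv_def cross_edge_def)

lemma dualsum_new_request_le_cost:
  assumes inv: "dual_inv s" and due: "atime (arrived s) = time s" and v: "v < arrived s"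
  shows "dualsum N (yv s) (arrived s) v \<le> cost pos atime (arrived s) v"
proof -
  let ?w = "arrived s"
  let ?V = "{S. S \<subseteq> {..<N} \<and> v \<in> S}"
  have y_nonneg: "\<forall>S. 0 \<le> yv s S" and y_zero: "\<And>S. ?w \<in> S \<Longrightarrow> yv s S = 0"
    and load: "(\<Sum>S\<in>?V. yv s S) \<le> time s - atime v"
    using inv v unfolding dual_inv_def by auto
  have "dualsum N (yv s) ?w v = (\<Sum>S\<in>{S. S \<subseteq> {..<N} \<and> (?w \<in> S) \<noteq> (v \<in> S)} \<inter> ?V. yv s S)"
    unfolding dualsum_def
    by (rule sum.mono_neutral_right[OF finite_subsets_lessThan]) (auto intro: y_zero)
  also have "\<dots> \<le> (\<Sum>S\<in>?V. yv s S)"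
    by (rule sum_mono2[OF finite_subsets_lessThan]) (auto simp: y_nonneg)
  also have "\<dots> \<le> atime ?w - atime v" using load due by simp
  also have "\<dots> \<le> cost pos atime ?w v"
    unfolding cost_def by (simp add: add_increasing)
  finally show ?thesis .
qed

lemma dual_inv_arrive:
  assumes inv: "dual_inv s" and due: "atime (arrived s) = time s"
  shows "dual_inv (s\<lparr>arrived := Suc (arrived s), active := insert {arrived s} (active s)\<rparr>)"
    (is "dual_inv ?s'")
proof -
  let ?w = "arrived s"
  have cross: "dualsum N (yv s) u v \<le> cost pos atime u v" if ce: "cross_edge sg ?s' u v" for u v
  proof -
    consider "u < ?w" "v < ?w" | "u = ?w" "v < ?w" | "v = ?w" "u < ?w"
      using ce unfolding cross_edge_def by (auto simp: less_Suc_eq)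
    then show ?thesis
    proof cases
      case 1
      then have "cross_edge sg s u v" using ce by (auto simp: cross_edge_def)
      then show ?thesis using inv by (simp add: dual_inv_def)
    next
      case 2
      then show ?thesis using dualsum_new_request_le_cost[OF inv due] by simp
    next
      case 3
      then show ?thesis
        using dualsum_new_request_le_cost[OF inv due, of u] dualsum_commute cost_commute by metis
    qed
  qed
  have "yv s S = 0" if "?w \<in> S" for S using inv that unfolding dual_inv_def by blast
  then have load_new: "(\<Sum>S\<in>{S. S \<subseteq> {..<N} \<and> ?w \<in> S}. yv s S) \<le> time s - atime ?w"
    using due by simp
  have support: "\<forall>S. yv s S \<noteq> 0 \<longrightarrow> S \<subseteq> {..<Suc ?w}"
    using inv unfolding dual_inv_def by fastforce
  show ?thesis
    using inv cross load_new support unfolding dual_inv_def by (auto simp: less_Suc_eq)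
qed

lemma cross_edge_merge:
  assumes "cross_edge sg (s\<lparr>active := insert (S1 \<union> S2) (active s - {S1, S2}), marked := K\<rparr>) u v"
  shows "cross_edge sg s u v"
  using assms unfolding cross_edge_def by (simp, blast)

lemma dual_inv_merge:
  "dual_inv s \<Longrightarrow>
     dual_inv (s\<lparr>active := insert (S1 \<union> S2) (active s - {S1, S2}), marked := K\<rparr>)"
  unfolding dual_inv_def by (auto dest: cross_edge_merge)

lemma dual_inv_grow:
  assumes inv: "dual_inv s" and part: "partition_on {..<arrived s} (active s)" and "0 < d"
    and feasible: "\<forall>u v. cross_edge sg s u v \<longrightarrow> dualsum N (grow_y s d) u v \<le> cost pos atime u v"
  shows "dual_inv (s\<lparr>time := time s + d, yv := grow_y s d\<rparr>)"
proof -
  have load: "(\<Sum>S\<in>{S. S \<subseteq> {..<N} \<and> v \<in> S}. grow_y s d S) \<le> time s + d - atime v"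
    if v: "v < arrived s" for v
  proof -
    let ?V = "{S. S \<subseteq> {..<N} \<and> v \<in> S}"
    let ?G = "{S\<in>?V. S \<in> active s \<and> growing s S}"
    have "finite ?G"
      by (rule finite_subset[OF _ finite_subsets_lessThan[of N "\<lambda>S. v \<in> S"]]) auto
    moreover have "\<forall>S\<in>?G. \<forall>T\<in>?G. S = T" using partition_on_block_unique[OF part] by blast
    ultimately have "card ?G \<le> Suc 0" by (simp add: card_le_Suc0_iff_eq)
    then have "d * real (card ?G) \<le> d" using \<open>0 < d\<close> by simp
    moreover have "(\<Sum>S\<in>?V. yv s S) \<le> time s - atime v" using inv v by (simp add: dual_inv_def)
    ultimately show ?thesis by (simp add: sum_grow_y[OF finite_subsets_lessThan])
  qed
  have "grow_y s d S \<noteq> 0 \<Longrightarrow> S \<subseteq> {..<arrived s}" for S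
    using inv partition_onD1[OF part] by (auto simp: grow_y_def dual_inv_def split: if_splits)
  then show ?thesis
    using inv \<open>0 < d\<close> load feasible
    by (auto simp: dual_inv_def cross_edge_def grow_y_def add_nonneg_nonneg)
qed

lemma gd_inv_step:
  assumes step: "gd_step N pos atime sg s s'" and inv: "gd_inv s"
  shows "gd_inv s'"
  using step
proof cases
  case (gd_match S u v)
  then show ?thesis
    using inv matching_inv_match by (simp add: gd_inv_def dual_inv_update_matching)
next
  case gd_arrive
  have "partition_on (insert (arrived s) {..<arrived s}) (insert {arrived s} (active s))"
    using inv by (intro partition_on_insert_singleton) (simp_all add: gd_inv_def)
  moreover have "Suc (arrived s) < N \<longrightarrow> time s \<le> atime (Suc (arrived s))"
    using gd_arrive atime_mono[of "arrived s" "Suc (arrived s)"] by simp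
  ultimately show ?thesis
    using gd_arrive inv dual_inv_arrive matching_inv_mono[of s s']
    by (simp add: gd_inv_def lessThan_Suc)
next
  case (gd_merge u v S1 S2)
  then show ?thesis
    using inv partition_on_merge[of "{..<arrived s}" "active s" S1 S2] dual_inv_merge
      matching_inv_mono[of s s']
    by (simp add: gd_inv_def)
next
  case (gd_grow d)
  then show ?thesis
    using inv dual_inv_grow matching_inv_mono[of s s'] by (simp add: gd_inv_def)
qed

definition potential :: "gd_state \<Rightarrow> nat" where
  "potential s = 2 * (N - arrived s) + card (active s) + (N - card (matched s))"

definition event_due :: "gd_state \<Rightarrow> bool" where
  "event_due s \<longleftrightarrow> tight_pending N pos atime sg s \<or> (arrived s < N \<and> time s = atime (arrived s))"

text \<open>A growth phase leaves the potential unchanged, but it always ends at an event, and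
  no growth phase can start while an event is due.\<close>

definition gd_measure :: "gd_state \<Rightarrow> nat" where
  "gd_measure s = 2 * potential s + (if event_due s then 0 else 1)"

lemma potential_match:
  assumes inv: "gd_inv s" and uv: "free s u" "free s v" "u \<noteq> v"
  shows "potential (s\<lparr>matching := insert (u, v) (matching s)\<rparr>) < potential s"
proof -
  let ?M = "insert u (insert v (matched s))"
  have "?M \<subseteq> {..<N}"
    using inv uv matched_subset[of s] by (auto simp: gd_inv_def free_def)
  then have "card ?M \<le> N" and "finite (matched s)"
    using card_mono[OF finite_lessThan] finite_subset by auto
  moreover have "u \<notin> matched s" "v \<notin> matched s" using uv free_iff_unmatched by auto
  ultimately have "card (matched s) + 2 \<le> N" using uv(3) by simp
  moreover have "matched (s\<lparr>matching := insert (u, v) (matching s)\<rparr>) = ?M"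
    by (auto simp: matched_def)
  ultimately show ?thesis
    using \<open>u \<notin> matched s\<close> \<open>v \<notin> matched s\<close> \<open>finite (matched s)\<close> uv(3)
    by (simp add: potential_def)
qed

lemma potential_arrive:
  assumes inv: "gd_inv s" and "arrived s < N"
  shows "potential (s\<lparr>arrived := Suc (arrived s), active := insert {arrived s} (active s)\<rparr>)
           < potential s"
proof -
  have part: "partition_on {..<arrived s} (active s)" using inv by (simp add: gd_inv_def)
  then have "finite (active s)" by (simp add: finite_elements[OF finite_lessThan])
  moreover have "{arrived s} \<notin> active s" using partition_onD1[OF part] by blast
  ultimately show ?thesis using \<open>arrived s < N\<close> by (simp add: potential_def matched_def)
qed

lemma potential_merge:
  assumes inv: "gd_inv s" and "S1 \<in> active s" "S2 \<in> active s" "S1 \<noteq> S2"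
  shows "potential (s\<lparr>active := insert (S1 \<union> S2) (active s - {S1, S2}), marked := K\<rparr>)
           < potential s"
proof -
  have part: "partition_on {..<arrived s} (active s)" using inv by (simp add: gd_inv_def)
  then show ?thesis
    using card_partition_merge_less[OF part finite_elements[OF finite_lessThan part]] assms(2-4)
    by (simp add: potential_def matched_def)
qed

lemma gd_measure_step:
  assumes step: "gd_step N pos atime sg s s'" and inv: "gd_inv s"
  shows "gd_measure s' < gd_measure s"
proof -
  have "potential s' < potential s \<or> (potential s' = potential s \<and> event_due s' \<and> \<not> event_due s)"
    using step
  proof cases
    case (gd_match S u v)
    then show ?thesis using potential_match[OF inv] by blast
  next
    case gd_arrive
    then show ?thesis using potential_arrive[OF inv] by blast
  next
    case (gd_merge u v S1 S2)
    then have "S1 \<noteq> S2" by (auto simp: cross_edge_def)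
    then show ?thesis using gd_merge potential_merge[OF inv] by blast
  next
    case (gd_grow d)
    then show ?thesis
      by (auto simp: potential_def matched_def event_due_def tight_pending_def cross_edge_def)
  qed
  then show ?thesis by (auto simp: gd_measure_def)
qed

lemma sign_cases:
  obtains "\<forall>i<N. sg i = 0"
  | "\<forall>i<N. sg i = 1 \<or> sg i = -1" "card {i. i < N \<and> sg i = 1} = m"
  using valid unfolding valid_instance_def by blast

lemma sum_signs_eq_0: "(\<Sum>x<N. sg x) = 0"
proof (cases rule: sign_cases)
  case 1
  then show ?thesis by simp
next
  case 2
  let ?P = "{i. i < N \<and> sg i = 1}"
  have sub: "?P \<subseteq> {..<N}" by auto
  have "(\<Sum>x<N. sg x) = (\<Sum>x\<in>{..<N} - ?P. sg x) + (\<Sum>x\<in>?P. sg x)"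
    by (rule sum.subset_diff[OF sub]) simp
  also have "(\<Sum>x\<in>?P. sg x) = (\<Sum>x\<in>?P. 1)" by (rule sum.cong) auto
  also have "(\<Sum>x\<in>{..<N} - ?P. sg x) = (\<Sum>x\<in>{..<N} - ?P. -1)"
    by (rule sum.cong) (use 2 in auto)
  also have "card ({..<N} - ?P) = m" using 2 sub by (simp add: card_Diff_subset)
  then have "(\<Sum>x\<in>{..<N} - ?P. (-1::int)) = - int m" by simp
  also have "(\<Sum>x\<in>?P. (1::int)) = int m" using 2 by simp
  finally show ?thesis by simp
qed

lemma exists_free_partner:
  assumes inv: "gd_inv s" and all: "arrived s = N" and u: "free s u"
  shows "\<exists>v. free s v \<and> v \<noteq> u \<and> sg v = - sg u"
proof -
  let ?F = "{..<N} - matched s"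
  have free_iff: "free s x \<longleftrightarrow> x \<in> ?F" for x using free_iff_unmatched all by auto
  have M: "matching_inv s" using inv by (simp add: gd_inv_def)
  have sub: "matched s \<subseteq> {..<N}" using matched_subset[OF M] all by simp
  have "u \<in> ?F" using u free_iff by blast
  then have "card ?F \<noteq> 0" by auto
  show ?thesis
  proof (cases rule: sign_cases)
    case 1
    have "card ?F = 2 * (m - card (matching s))"
      using M sub by (simp add: matching_inv_def card_Diff_subset finite_subset diff_mult_distrib2)
    then have "2 \<le> card ?F" using \<open>card ?F \<noteq> 0\<close> by simp
    then have "\<not> ?F \<subseteq> {u}" using card_mono[of "{u}" ?F] by auto
    then obtain v where "v \<in> ?F" "v \<noteq> u" by blast
    then show ?thesis using 1 \<open>u \<in> ?F\<close> free_iff by auto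
  next
    case 2
    show ?thesis
    proof (rule ccontr)
      assume no_partner: "\<not> ?thesis"
      have "sg x = sg u" if "x \<in> ?F" for x
      proof -
        have "sg x = 1 \<or> sg x = -1" "sg u = 1 \<or> sg u = -1" using 2 that \<open>u \<in> ?F\<close> by auto
        moreover have "\<not> (x \<noteq> u \<and> sg x = - sg u)" using no_partner free_iff that by blast
        ultimately show ?thesis by auto
      qed
      then have "(\<Sum>x\<in>?F. sg x) = int (card ?F) * sg u" by simp
      moreover have "(\<Sum>x\<in>?F. sg x) = 0"
        using sum_diff[OF finite_lessThan sub, of sg] sum_signs_eq_0 M
        by (simp add: matching_inv_def)
      ultimately show False using \<open>card ?F \<noteq> 0\<close> 2 \<open>u \<in> ?F\<close> by auto
    qed
  qed
qed

lemma perfect_matching_if_no_free: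
  assumes inv: "gd_inv s" and all: "arrived s = N" and no_free: "\<forall>u. \<not> free s u"
  shows "perfect_matching N sg (matching s)"
  unfolding perfect_matching_def
proof (intro conjI allI impI)
  have M: "matching_inv s" using inv by (simp add: gd_inv_def)
  then show "\<forall>(a, b)\<in>matching s. a < N \<and> b < N \<and> a \<noteq> b \<and> sg a = - sg b"
    using all by (simp add: matching_inv_def)
  fix u assume "u < N"
  then have "u \<in> matched s" using no_free free_iff_unmatched all by auto
  then obtain p where p: "p \<in> matching s" "fst p = u \<or> snd p = u" unfolding matched_def by auto
  show "\<exists>!p. p \<in> matching s \<and> (fst p = u \<or> snd p = u)"
  proof (rule ex1I[of _ p])
    show "p \<in> matching s \<and> (fst p = u \<or> snd p = u)" using p by blast
    fix q assume q: "q \<in> matching s \<and> (fst q = u \<or> snd q = u)"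
    then have "{fst q, snd q} \<inter> {fst p, snd p} \<noteq> {}" using p by auto
    then show "q = p" using M p q unfolding matching_inv_def by blast
  qed
qed

lemma exists_growing_cross_edge:
  assumes inv: "gd_inv s" and all: "arrived s = N" and no_match: "\<not> match_pending sg s"
    and not_perfect: "\<not> perfect_matching N sg (matching s)"
  shows "\<exists>u v. cross_edge sg s u v \<and> 0 < growth_rate N s u v"
proof -
  obtain u where u: "free s u"
    using perfect_matching_if_no_free[OF inv all] not_perfect by blast
  obtain v where v: "free s v" "v \<noteq> u" "sg v = - sg u"
    using exists_free_partner[OF inv all u] by blast
  have part: "partition_on {..<arrived s} (active s)" using inv by (simp add: gd_inv_def)
  have "u < arrived s" using u by (simp add: free_def)
  then obtain S where S: "S \<in> active s" "u \<in> S" using partition_onD1[OF part] by blast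
  have "v \<notin> S"
  proof
    assume "v \<in> S"
    have "match_pending sg s"
      unfolding match_pending_def
      by (rule bexI[OF _ S(1)], rule bexI[OF _ S(2)], rule bexI[OF _ \<open>v \<in> S\<close>])
        (use u v in auto)
    then show False using no_match by blast
  qed
  then have "\<not> (\<exists>T\<in>active s. u \<in> T \<and> v \<in> T)"
    using S partition_on_block_unique[OF part] by blast
  moreover have "u < arrived s" "v < arrived s" using u v by (simp_all add: free_def)
  ultimately have cross: "cross_edge sg s u v"
    using v(2,3) unfolding cross_edge_def by auto
  have "S \<subseteq> {..<arrived s}" using S(1) partition_onD1[OF part] by blast
  then have "S \<subseteq> {..<N}" using all by simp
  moreover have "growing s S" using S u unfolding growing_def by blast
  ultimately have "S \<in> {S\<in>{S. S \<subseteq> {..<N} \<and> (u \<in> S) \<noteq> (v \<in> S)}. S \<in> active s \<and> growing s S}"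
    using S \<open>v \<notin> S\<close> by simp
  moreover have "finite {S\<in>{S. S \<subseteq> {..<N} \<and> (u \<in> S) \<noteq> (v \<in> S)}. S \<in> active s \<and> growing s S}"
    using finite_subsets_lessThan by simp
  ultimately have "0 < growth_rate N s u v"
    unfolding growth_rate_def by (auto simp: card_gt_0_iff)
  then show ?thesis using cross by blast
qed

lemma exists_grow_step:
  assumes inv: "gd_inv s" and no_match: "\<not> match_pending sg s"
    and no_tight: "\<not> tight_pending N pos atime sg s"
    and not_due: "arrived s < N \<longrightarrow> time s < atime (arrived s)"
    and will_grow: "arrived s < N \<or> (\<exists>u v. cross_edge sg s u v \<and> 0 < growth_rate N s u v)"
  shows "\<exists>s'. gd_step N pos atime sg s s'"
proof -
  define E where "E = {(u, v). cross_edge sg s u v}"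
  define slack where "slack = (\<lambda>(u, v). cost pos atime u v - dualsum N (yv s) u v)"
  define rate where "rate = (\<lambda>(u, v). growth_rate N s u v)"
  have "E \<subseteq> {..<arrived s} \<times> {..<arrived s}" unfolding E_def cross_edge_def by clarsimp
  then have "finite E" by (rule finite_subset) simp
  moreover have "\<forall>e\<in>E. 0 < slack e"
  proof
    fix e assume "e \<in> E"
    then obtain u v where e: "e = (u, v)" "cross_edge sg s u v" unfolding E_def by blast
    then have "dualsum N (yv s) u v \<le> cost pos atime u v"
      using inv by (simp add: gd_inv_def dual_inv_def)
    moreover have "dualsum N (yv s) u v \<noteq> cost pos atime u v"
      using no_tight e unfolding tight_pending_def by blast
    ultimately show "0 < slack e" using e unfolding slack_def by simp
  qed
  moreover have "\<forall>e\<in>E. 0 \<le> rate e" unfolding rate_def growth_rate_def by auto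
  moreover have "arrived s < N \<or> (\<exists>e\<in>E. 0 < rate e)"
    using will_grow unfolding E_def rate_def by auto
  ultimately obtain d where d: "0 < d" "arrived s < N \<longrightarrow> d \<le> atime (arrived s) - time s"
      "\<forall>e\<in>E. d * rate e \<le> slack e"
      "(arrived s < N \<and> d = atime (arrived s) - time s) \<or> (\<exists>e\<in>E. d * rate e = slack e)"
    using exists_first_event[of E slack rate "arrived s < N" "atime (arrived s) - time s"] not_due
    by auto
  have "gd_step N pos atime sg s (s\<lparr>time := time s + d, yv := grow_y s d\<rparr>)"
  proof (rule gd_grow)
    show "\<forall>u v. cross_edge sg s u v \<longrightarrow> dualsum N (grow_y s d) u v \<le> cost pos atime u v"
    proof (intro allI impI)
      fix u v assume "cross_edge sg s u v"
      then have "d * growth_rate N s u v \<le> cost pos atime u v - dualsum N (yv s) u v"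
        using d(3) unfolding E_def slack_def rate_def by auto
      then show "dualsum N (grow_y s d) u v \<le> cost pos atime u v" by (simp add: dualsum_grow_y)
    qed
    show "(arrived s < N \<and> time s + d = atime (arrived s)) \<or>
          (\<exists>u v. cross_edge sg s u v \<and> dualsum N (grow_y s d) u v = cost pos atime u v)"
      using d(4) unfolding E_def slack_def rate_def
      by (auto simp: dualsum_grow_y algebra_simps)
  qed (use no_match no_tight not_due d(1,2) in auto)
  then show ?thesis by blast
qed

lemma gd_progress:
  assumes inv: "gd_inv s" and not_perfect: "\<not> perfect_matching N sg (matching s)"
  shows "\<exists>s'. gd_step N pos atime sg s s'"
proof -
  have "arrived s \<le> N" "arrived s < N \<longrightarrow> time s \<le> atime (arrived s)"
    and part: "partition_on {..<arrived s} (active s)"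
    using inv by (simp_all add: gd_inv_def)
  consider (match) "match_pending sg s"
    | (arrive) "\<not> match_pending sg s" "arrived s < N" "atime (arrived s) = time s"
    | (merge) "\<not> match_pending sg s" "tight_pending N pos atime sg s"
    | (grow) "\<not> match_pending sg s" "\<not> tight_pending N pos atime sg s"
        "arrived s < N \<longrightarrow> time s < atime (arrived s)"
    using \<open>arrived s < N \<longrightarrow> time s \<le> atime (arrived s)\<close> by force
  then show ?thesis
  proof cases
    case match
    then show ?thesis unfolding match_pending_def by (blast intro: gd_match)
  next
    case arrive
    then show ?thesis by (blast intro: gd_arrive)
  next
    case merge
    then obtain u v where tight: "cross_edge sg s u v" "dualsum N (yv s) u v = cost pos atime u v"
      unfolding tight_pending_def by blast
    then have "u \<in> \<Union>(active s)" "v \<in> \<Union>(active s)"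
      using partition_onD1[OF part] unfolding cross_edge_def by auto
    then obtain S1 S2 where "S1 \<in> active s" "u \<in> S1" "S2 \<in> active s" "v \<in> S2" by blast
    then show ?thesis using gd_merge[OF merge(1) tight] by blast
  next
    case grow
    moreover have "arrived s < N \<or> (\<exists>u v. cross_edge sg s u v \<and> 0 < growth_rate N s u v)"
      using exists_growing_cross_edge[OF inv _ grow(1) not_perfect] \<open>arrived s \<le> N\<close>
      by fastforce
    ultimately show ?thesis using exists_grow_step[OF inv] by blast
  qed
qed

end

theorem lemma4:
  fixes m :: nat and pos :: "nat \<Rightarrow> 'a::metric_space"
    and atime :: "nat \<Rightarrow> real" and sg :: "nat \<Rightarrow> int"
  assumes "valid_instance m atime sg"
  shows "inevitably (gd_step (2*m) pos atime sg)
           (\<lambda>s. perfect_matching (2*m) sg (matching s)) gd_init"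
proof -
  interpret gd_instance m pos atime sg by (rule gd_instance.intro) (rule assms)
  show ?thesis
    using gd_inv_init gd_inv_step gd_measure_step gd_progress
    by (intro inevitably_by_measure[where I = gd_inv and \<mu> = gd_measure]) auto
qed

end
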